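(* Let $G$ be a plane geometric graph, and let $Q$ be a finite set of points in the plane that is disjoint from $G$. Let $G'$ be the geometric graph obtained from $G$ by adding the points of $Q$ as vertices and connecting every point $p\in Q$ by a straight-line segment to its closest visible vertex of $G$. Then $G'$ is plane.
   Context: A geometric graph is a graph whose vertices are points in the plane and whose edges are straight-line segments between their endpoints; it is plane if no two of its edges cross. For a plane geometric graph $G$ and a point $p$ not in $G$, a vertex $q$ of $G$ is visible from $p$ if the segment $pq$ does not cross any edge of $G$. Among all vertices of $G$ visible from $p$, the one closest to $p$ (in Euclidean distance) is called the closest visible vertex of $G$ from $p$. A set $Q$ is disjoint from $G$ if no point of $Q$ lies on a vertex or edge of $G$. *)

theory Defs
  imports "HOL-Analysis.Analysis"
begin

type_synonym pt = "real^2"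

definition seg_cross :: "pt \<Rightarrow> pt \<Rightarrow> pt \<Rightarrow> pt \<Rightarrow> bool" where
  "seg_cross a b c d \<longleftrightarrow>
     (\<exists>x. closed_segment a b \<inter> closed_segment c d = {x} \<and>
          x \<in> open_segment a b \<and> x \<in> open_segment c d)"

definition geometric_graph :: "pt set \<Rightarrow> pt set set \<Rightarrow> bool" where
  "geometric_graph V E \<longleftrightarrow> finite V \<and>
     (\<forall>e\<in>E. \<exists>a b. e = {a, b} \<and> a \<in> V \<and> b \<in> V \<and> a \<noteq> b)"

definition edges_cross :: "pt set \<Rightarrow> pt set \<Rightarrow> bool" where
  "edges_cross e f \<longleftrightarrow> (\<exists>a b c d. e = {a, b} \<and> f = {c, d} \<and> seg_cross a b c d)"

definition plane_graph :: "pt set \<Rightarrow> pt set set \<Rightarrow> bool" where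
  "plane_graph V E \<longleftrightarrow> geometric_graph V E \<and> (\<forall>e\<in>E. \<forall>f\<in>E. \<not> edges_cross e f)"

definition graph_points :: "pt set \<Rightarrow> pt set set \<Rightarrow> pt set" where
  "graph_points V E = V \<union> \<Union>{closed_segment a b | a b. {a, b} \<in> E}"

definition visible :: "pt set \<Rightarrow> pt set set \<Rightarrow> pt \<Rightarrow> pt \<Rightarrow> bool" where
  "visible V E p q \<longleftrightarrow> q \<in> V \<and> (\<forall>a b. {a, b} \<in> E \<longrightarrow> \<not> seg_cross p q a b)"

definition closest_visible :: "pt set \<Rightarrow> pt set set \<Rightarrow> pt \<Rightarrow> pt \<Rightarrow> bool" where
  "closest_visible V E p q \<longleftrightarrow> visible V E p q \<and>
     (\<forall>q'. visible V E p q' \<longrightarrow> dist p q \<le> dist p q')"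

end

theory Submission
  imports Defs
begin

text \<open>Suppose the segments p q and p' q' joining two points of Q to their closest visible
  vertices cross at x; a segment from a point of Q to a visible vertex crosses no edge of G by
  definition. By the triangle inequality at x we may assume |p q'| < |p q|. Among the vertices of
  G in the triangle p x q', which contains q', let v be the first one in angular order around p,
  starting from the ray p x. Then |p v| < |p q|, so some edge crosses p v. Followed from the
  crossing point to the side of the line p v containing x, this edge cannot end inside the
  triangle by the choice of v, so it leaves the triangle through p x or through x q', crossing
  p q or p' q': both are impossible by visibility.\<close>

definition cross2 :: "pt \<Rightarrow> pt \<Rightarrow> real" where
  "cross2 u w = u$1 * w$2 - u$2 * w$1"

lemma vec2_eq_iff: "(z::pt) = z' \<longleftrightarrow> z$1 = z'$1 \<and> z$2 = z'$2"
  by (simp add: vec_eq_iff forall_2)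

lemma cross2_add:
  "cross2 (z + z') w = cross2 z w + cross2 z' w"
  "cross2 w (z + z') = cross2 w z + cross2 w z'"
  by (simp_all add: cross2_def algebra_simps)

lemma cross2_diff:
  "cross2 (z - z') w = cross2 z w - cross2 z' w"
  "cross2 w (z - z') = cross2 w z - cross2 w z'"
  by (simp_all add: cross2_def algebra_simps)

lemma cross2_scaleR [simp]:
  "cross2 (c *\<^sub>R z) w = c * cross2 z w"
  "cross2 w (c *\<^sub>R z) = c * cross2 w z"
  by (simp_all add: cross2_def algebra_simps)

lemma cross2_zero [simp]: "cross2 0 w = 0" "cross2 w 0 = 0" "cross2 z z = 0"
  by (simp_all add: cross2_def)

lemma cross2_eq_0_imp_parallel:
  assumes "cross2 z w = 0" "w \<noteq> 0"
  shows "\<exists>k. z = k *\<^sub>R w"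
proof (cases "w$1 = 0")
  case True
  then have "w$2 \<noteq> 0" using assms(2) by (auto simp: vec2_eq_iff)
  moreover have "z$1 = 0" using assms(1) True calculation by (simp add: cross2_def)
  ultimately show ?thesis using True
    by (intro exI[of _ "z$2 / w$2"]) (simp add: vec2_eq_iff)
next
  case False
  have "z$1 * w$2 = z$2 * w$1" using assms(1) by (simp add: cross2_def)
  then show ?thesis using False
    by (intro exI[of _ "z$1 / w$1"]) (auto simp: vec2_eq_iff field_simps)
qed

lemma cross2_coordinates:
  assumes "cross2 u w \<noteq> 0"
  shows "z = (cross2 z w / cross2 u w) *\<^sub>R u + (cross2 u z / cross2 u w) *\<^sub>R w"
proof -
  have "cross2 z w * u$i + cross2 u z * w$i = z$i * cross2 u w" if "i = 1 \<or> i = 2" for i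
    using that by (auto simp: cross2_def algebra_simps)
  then show ?thesis
    using assms by (simp add: vec2_eq_iff add_divide_distrib[symmetric])
qed

lemma cross2_pluecker:
  "cross2 u z * cross2 v w - cross2 z w * cross2 u v = cross2 u w * cross2 v z"
  by (simp add: cross2_def algebra_simps)

lemma in_open_segment_iff:
  "z \<in> open_segment a b \<longleftrightarrow> a \<noteq> b \<and> (\<exists>t. 0 < t \<and> t < 1 \<and> z = a + t *\<^sub>R (b - a))"
  by (simp add: in_segment algebra_simps)

lemma in_closed_segment_iff:
  "z \<in> closed_segment a b \<longleftrightarrow> (\<exists>t. 0 \<le> t \<and> t \<le> 1 \<and> z = a + t *\<^sub>R (b - a))"
  by (simp add: in_segment algebra_simps)

lemma seg_cross_commute: "seg_cross a b c d \<longleftrightarrow> seg_cross c d a b"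
  unfolding seg_cross_def by (auto simp: Int_commute)

lemma seg_cross_swap_left: "seg_cross a b c d \<longleftrightarrow> seg_cross b a c d"
  unfolding seg_cross_def by (simp add: closed_segment_commute open_segment_commute)

lemma seg_cross_swap_right: "seg_cross a b c d \<longleftrightarrow> seg_cross a b d c"
  unfolding seg_cross_def by (simp add: closed_segment_commute open_segment_commute)

lemma edges_cross_doubleton_iff: "edges_cross {a, b} {c, d} \<longleftrightarrow> seg_cross a b c d"
  unfolding edges_cross_def doubleton_eq_iff
  by (auto simp: seg_cross_swap_left[of a] seg_cross_swap_right[of _ _ c])

lemma seg_cross_not_parallel:
  assumes "seg_cross a b c d"
  shows "cross2 (b - a) (d - c) \<noteq> 0"
proof
  assume "cross2 (b - a) (d - c) = 0"
  from assms obtain z where z: "closed_segment a b \<inter> closed_segment c d = {z}"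
    "z \<in> open_segment a b" "z \<in> open_segment c d" unfolding seg_cross_def by blast
  from z(2) obtain \<mu> where ab: "a \<noteq> b" "0 < \<mu>" "\<mu> < 1" "z = a + \<mu> *\<^sub>R (b - a)"
    by (auto simp: in_open_segment_iff)
  from z(3) obtain \<nu> where cd: "c \<noteq> d" "0 < \<nu>" "\<nu> < 1" "z = c + \<nu> *\<^sub>R (d - c)"
    by (auto simp: in_open_segment_iff)
  obtain k where k: "b - a = k *\<^sub>R (d - c)"
    using cross2_eq_0_imp_parallel \<open>cross2 (b - a) (d - c) = 0\<close> cd(1) by force
  \<comment> \<open>Moving z slightly along the common direction stays in both segments.\<close>
  define m where "m = min \<nu> (1 - \<nu>) / (\<bar>k\<bar> + 1)"
  define \<epsilon> where "\<epsilon> = min (min \<mu> (1 - \<mu>)) m / 2"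
  have "0 < m" using cd by (simp add: m_def)
  then have \<epsilon>: "0 < \<epsilon>" "\<epsilon> \<le> \<mu>" "\<epsilon> \<le> 1 - \<mu>" "\<epsilon> \<le> m"
    using ab by (auto simp: \<epsilon>_def)
  then have "\<epsilon> * (\<bar>k\<bar> + 1) \<le> min \<nu> (1 - \<nu>)"
    by (simp add: m_def pos_le_divide_eq)
  then have "\<bar>\<epsilon> * k\<bar> \<le> min \<nu> (1 - \<nu>)"
    using \<epsilon>(1) by (simp add: abs_mult algebra_simps)
  then have \<nu>k: "0 \<le> \<nu> + \<epsilon> * k" "\<nu> + \<epsilon> * k \<le> 1" by (auto simp: abs_le_iff)
  define z' where "z' = z + \<epsilon> *\<^sub>R (b - a)"
  have "z' \<in> closed_segment a b" unfolding in_closed_segment_iff using \<epsilon> ab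
    by (intro exI[of _ "\<mu> + \<epsilon>"]) (simp add: z'_def algebra_simps)
  moreover have "z' \<in> closed_segment c d" unfolding in_closed_segment_iff using \<nu>k cd
    by (intro exI[of _ "\<nu> + \<epsilon> * k"]) (simp add: z'_def k algebra_simps)
  moreover have "z' \<noteq> z" using \<epsilon> ab by (simp add: z'_def)
  ultimately show False using z(1) by blast
qed

lemma seg_cross_if_common_point:
  assumes "z \<in> open_segment a b" "z \<in> open_segment c d" "cross2 (b - a) (d - c) \<noteq> 0"
  shows "seg_cross a b c d"
  unfolding seg_cross_def
proof (intro exI conjI)
  show "closed_segment a b \<inter> closed_segment c d = {z}"
  proof (intro equalityI subsetI)
    fix z' assume "z' \<in> closed_segment a b \<inter> closed_segment c d"
    then obtain \<mu>' \<nu>' where z': "z' = a + \<mu>' *\<^sub>R (b - a)" "z' = c + \<nu>' *\<^sub>R (d - c)"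
      unfolding Int_iff in_closed_segment_iff by blast
    obtain \<mu> \<nu> where z: "z = a + \<mu> *\<^sub>R (b - a)" "z = c + \<nu> *\<^sub>R (d - c)"
      using assms(1,2) unfolding in_open_segment_iff by blast
    have "(\<mu>' - \<mu>) *\<^sub>R (b - a) = z' - z"
      using z(1) z'(1) by (simp add: scaleR_diff_left)
    also have "\<dots> = (\<nu>' - \<nu>) *\<^sub>R (d - c)"
      using z(2) z'(2) by (simp add: scaleR_diff_left)
    finally have "(\<mu>' - \<mu>) *\<^sub>R (b - a) = (\<nu>' - \<nu>) *\<^sub>R (d - c)" .
    then have "(\<mu>' - \<mu>) * cross2 (b - a) (d - c) = 0"
      by (metis cross2_scaleR cross2_zero mult_zero_right)
    then show "z' \<in> {z}" using assms(3) z z' by simp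
  qed (use assms open_closed_segment in blast)
qed (fact assms)+

lemma seg_cross_iff:
  "seg_cross a b c d \<longleftrightarrow>
     (\<exists>z. z \<in> open_segment a b \<and> z \<in> open_segment c d) \<and> cross2 (b - a) (d - c) \<noteq> 0"
  using seg_cross_not_parallel seg_cross_if_common_point unfolding seg_cross_def by blast

lemma seg_cross_subsegment:
  assumes "seg_cross a b c d" "a \<in> closed_segment a' b'" "b \<in> closed_segment a' b'"
  shows "seg_cross a' b' c d"
proof -
  obtain z where z: "z \<in> open_segment a b" "z \<in> open_segment c d"
    and nonpar: "cross2 (b - a) (d - c) \<noteq> 0"
    using assms(1) unfolding seg_cross_iff by blast
  have "a \<noteq> b" using z(1) by auto
  have "z \<in> open_segment a' b'"
    using z(1) assms(2,3) subset_open_segment[of a b a' b'] by blast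
  moreover obtain \<alpha> \<beta> where "a = a' + \<alpha> *\<^sub>R (b' - a')" "b = a' + \<beta> *\<^sub>R (b' - a')"
    using assms(2,3) unfolding in_closed_segment_iff by blast
  then have "b - a = (\<beta> - \<alpha>) *\<^sub>R (b' - a')" by (simp add: scaleR_diff_left)
  then have "cross2 (b' - a') (d - c) \<noteq> 0" using nonpar by simp
  ultimately show ?thesis using z(2) seg_cross_if_common_point by blast
qed

lemma seg_cross_point_off_line:
  assumes "seg_cross p q p' q'" "x \<in> open_segment p q" "x \<in> open_segment p' q'"
  shows "cross2 (x - p) (q' - p) \<noteq> 0"
proof -
  obtain \<mu> where \<mu>: "0 < \<mu>" "x = p + \<mu> *\<^sub>R (q - p)"
    using assms(2) by (auto simp: in_open_segment_iff)
  obtain \<nu> where \<nu>: "\<nu> < 1" "x = p' + \<nu> *\<^sub>R (q' - p')"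
    using assms(3) by (auto simp: in_open_segment_iff)
  have "x - p = \<mu> *\<^sub>R (q - p)"
    using \<mu>(2) by simp
  moreover have "q' - p = (1 - \<nu>) *\<^sub>R (q' - p') + (x - p)"
    using \<nu>(2) by (simp add: algebra_simps)
  ultimately have "q' - p = (1 - \<nu>) *\<^sub>R (q' - p') + \<mu> *\<^sub>R (q - p)"
    by simp
  then have "cross2 (x - p) (q' - p) = \<mu> * (1 - \<nu>) * cross2 (q - p) (q' - p')"
    using \<open>x - p = \<mu> *\<^sub>R (q - p)\<close> by (simp add: cross2_add)
  then show ?thesis using \<mu> \<nu> seg_cross_not_parallel[OF assms(1)] by simp
qed

text \<open>Otherwise the triangle inequality for p, x, q' is an equality, putting the crossing point x
  on the segment p q'.\<close>
lemma seg_cross_shorter_side: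
  assumes "seg_cross p q p' q'"
  shows "dist p q' < dist p q \<or> dist p' q < dist p' q'"
proof (rule ccontr)
  assume no_shorter: "\<not> ?thesis"
  obtain x where x: "x \<in> open_segment p q" "x \<in> open_segment p' q'"
    using assms unfolding seg_cross_def by blast
  have "dist p q = dist p x + dist x q" "dist p' q' = dist p' x + dist x q'"
    using x open_closed_segment between between_mem_segment by metis+
  moreover have "dist p q' \<le> dist p x + dist x q'" "dist p' q \<le> dist p' x + dist x q"
    by (simp_all add: dist_triangle)
  ultimately have "dist p q' = dist p x + dist x q'" using no_shorter by linarith
  then have "x \<in> closed_segment p q'" using between between_mem_segment by metis
  then obtain \<kappa> where "x = p + \<kappa> *\<^sub>R (q' - p)"
    unfolding in_closed_segment_iff by blast
  then have "x - p = \<kappa> *\<^sub>R (q' - p)" by simp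
  then show False using seg_cross_point_off_line[OF assms x] by simp
qed

lemma linear_nonneg_between:
  fixes \<alpha> \<beta> \<sigma> l :: real
  assumes "0 \<le> \<alpha>" "0 \<le> \<alpha> + \<sigma> * \<beta>" "0 \<le> l" "l \<le> \<sigma>"
  shows "0 \<le> \<alpha> + l * \<beta>"
proof (cases "0 \<le> \<beta>")
  case False
  then have "\<sigma> * \<beta> \<le> l * \<beta>" using assms(4) by (simp add: mult_right_mono_neg)
  then show ?thesis using assms(2) by linarith
qed (use assms in simp)

lemma linear_entry_time:
  fixes \<alpha> \<beta> \<sigma> :: real
  assumes "0 < \<sigma>" "0 \<le> \<alpha> + \<sigma> * \<beta>"
  obtains e where "0 \<le> e" "e \<le> \<sigma>" "\<And>l. e \<le> l \<Longrightarrow> l \<le> \<sigma> \<Longrightarrow> 0 \<le> \<alpha> + l * \<beta>"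
    "\<alpha> < 0 \<Longrightarrow> 0 < e \<and> \<alpha> + e * \<beta> = 0" "\<not> \<alpha> < 0 \<Longrightarrow> e = 0"
proof (cases "\<alpha> < 0")
  case True
  then have "0 < \<sigma> * \<beta>" using assms(2) by linarith
  then have "0 < \<beta>" using assms(1) by (simp add: zero_less_mult_iff)
  show ?thesis
  proof (rule that[of "- \<alpha> / \<beta>"])
    show "0 \<le> - \<alpha> / \<beta>" "- \<alpha> / \<beta> \<le> \<sigma>"
      using \<open>0 < \<beta>\<close> True assms(2) by (simp_all add: field_simps)
    show "0 \<le> \<alpha> + l * \<beta>" if "- \<alpha> / \<beta> \<le> l" for l
      using that \<open>0 < \<beta>\<close> by (simp add: field_simps)
    show "0 < - \<alpha> / \<beta> \<and> \<alpha> + - \<alpha> / \<beta> * \<beta> = 0"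
      using \<open>0 < \<beta>\<close> True by (simp add: field_simps)
  qed (use True in simp)
next
  case False
  then show ?thesis
    using that[of 0] linear_nonneg_between[of \<alpha> \<sigma> \<beta>] assms by simp
qed

lemma linear_exit_point:
  fixes \<alpha>1 \<beta>1 \<alpha>2 \<beta>2 \<sigma> :: real
  assumes "0 < \<sigma>" "0 \<le> \<alpha>1 + \<sigma> * \<beta>1" "0 \<le> \<alpha>2 + \<sigma> * \<beta>2" "\<alpha>1 < 0 \<or> \<alpha>2 < 0"
  obtains l where "0 < l" "l \<le> \<sigma>" "0 \<le> \<alpha>1 + l * \<beta>1" "0 \<le> \<alpha>2 + l * \<beta>2"
    "\<alpha>1 + l * \<beta>1 = 0 \<or> \<alpha>2 + l * \<beta>2 = 0"
proof -
  obtain e1 where e1: "0 \<le> e1" "e1 \<le> \<sigma>" "\<And>l. e1 \<le> l \<Longrightarrow> l \<le> \<sigma> \<Longrightarrow> 0 \<le> \<alpha>1 + l * \<beta>1"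
    "\<alpha>1 < 0 \<Longrightarrow> 0 < e1 \<and> \<alpha>1 + e1 * \<beta>1 = 0" "\<not> \<alpha>1 < 0 \<Longrightarrow> e1 = 0"
    using linear_entry_time[OF assms(1,2)] by blast
  obtain e2 where e2: "0 \<le> e2" "e2 \<le> \<sigma>" "\<And>l. e2 \<le> l \<Longrightarrow> l \<le> \<sigma> \<Longrightarrow> 0 \<le> \<alpha>2 + l * \<beta>2"
    "\<alpha>2 < 0 \<Longrightarrow> 0 < e2 \<and> \<alpha>2 + e2 * \<beta>2 = 0" "\<not> \<alpha>2 < 0 \<Longrightarrow> e2 = 0"
    using linear_entry_time[OF assms(1,3)] by blast
  show ?thesis
  proof (cases "e1 \<le> e2")
    case True
    then have "\<alpha>2 < 0" using e1(4) e2(5) assms(4) by force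
    then show ?thesis using True e1 e2 that[of e2] by auto
  next
    case False
    then have "\<alpha>1 < 0" using e1(5) e2(1) assms(4) by force
    then show ?thesis using False e1 e2 that[of e1] by auto
  qed
qed

locale triangle_frame =
  fixes p x y :: pt
  assumes nondegenerate: "cross2 (x - p) (y - p) \<noteq> 0"
begin

text \<open>Affine coordinates with respect to the triangle p x y: p has coordinates (0, 0),
  x has (1, 0) and y has (0, 1).\<close>
definition s_coord :: "pt \<Rightarrow> real" where
  "s_coord z = cross2 (z - p) (y - p) / cross2 (x - p) (y - p)"

definition r_coord :: "pt \<Rightarrow> real" where
  "r_coord z = cross2 (x - p) (z - p) / cross2 (x - p) (y - p)"

definition in_triangle :: "pt \<Rightarrow> bool" where
  "in_triangle z \<longleftrightarrow> 0 \<le> s_coord z \<and> 0 \<le> r_coord z \<and> s_coord z + r_coord z \<le> 1"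

text \<open>side v z is the oriented area of p v z relative to that of p x y (side_eq_cross2); for v in
  the triangle it is negative exactly on the side of the line p v that contains x.\<close>
definition side :: "pt \<Rightarrow> pt \<Rightarrow> real" where
  "side v z = r_coord z * s_coord v - s_coord z * r_coord v"

lemma coords_decomp: "z = p + s_coord z *\<^sub>R (x - p) + r_coord z *\<^sub>R (y - p)"
  using cross2_coordinates[OF nondegenerate, of "z - p"]
  unfolding s_coord_def r_coord_def by (simp add: algebra_simps)

lemma coords_vertices [simp]:
  "s_coord p = 0" "r_coord p = 0" "s_coord y = 0" "r_coord y = 1"
  using nondegenerate by (simp_all add: s_coord_def r_coord_def)

lemma coords_diff:
  "s_coord b - s_coord a = cross2 (b - a) (y - p) / cross2 (x - p) (y - p)"
  "r_coord b - r_coord a = cross2 (x - p) (b - a) / cross2 (x - p) (y - p)"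
  by (simp_all add: s_coord_def r_coord_def diff_divide_distrib[symmetric] cross2_diff)

lemma coords_segment:
  "s_coord (a + l *\<^sub>R (b - a)) = s_coord a + l * (s_coord b - s_coord a)"
  "r_coord (a + l *\<^sub>R (b - a)) = r_coord a + l * (r_coord b - r_coord a)"
proof -
  have "s_coord (a + l *\<^sub>R (b - a)) - s_coord a = l * (s_coord b - s_coord a)"
    "r_coord (a + l *\<^sub>R (b - a)) - r_coord a = l * (r_coord b - r_coord a)"
    by (simp_all only: coords_diff) simp_all
  then show "s_coord (a + l *\<^sub>R (b - a)) = s_coord a + l * (s_coord b - s_coord a)"
    "r_coord (a + l *\<^sub>R (b - a)) = r_coord a + l * (r_coord b - r_coord a)"
    by simp_all
qed

lemma side_segment:
  "side v (a + l *\<^sub>R (b - a)) = side v a + l * (side v b - side v a)"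
  unfolding side_def coords_segment by (simp add: algebra_simps)

lemma side_eq_cross2: "side v z = cross2 (v - p) (z - p) / cross2 (x - p) (y - p)"
  using cross2_pluecker[of "x - p" "z - p" "v - p" "y - p"] nondegenerate
  by (simp add: side_def s_coord_def r_coord_def field_simps)

lemma in_triangle_y: "in_triangle y"
  by (simp add: in_triangle_def)

lemma coords_sum_pos:
  assumes "in_triangle z" "z \<noteq> p"
  shows "0 < s_coord z + r_coord z"
proof (rule ccontr)
  assume "\<not> ?thesis"
  then have "s_coord z = 0" "r_coord z = 0" using assms(1) by (auto simp: in_triangle_def)
  then show False using coords_decomp[of z] assms(2) by simp
qed

lemma dist_lt_if_in_triangle:
  assumes "in_triangle z" "dist p x < d" "dist p y < d"
  shows "dist p z < d"
proof -
  define M where "M = max (norm (x - p)) (norm (y - p))"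
  have coords: "0 \<le> s_coord z" "0 \<le> r_coord z" "s_coord z + r_coord z \<le> 1"
    using assms(1) by (simp_all add: in_triangle_def)
  have "dist p z = norm (s_coord z *\<^sub>R (x - p) + r_coord z *\<^sub>R (y - p))"
    using coords_decomp[of z] by (metis add.assoc add_diff_cancel_left' dist_commute dist_norm)
  also have "\<dots> \<le> norm (s_coord z *\<^sub>R (x - p)) + norm (r_coord z *\<^sub>R (y - p))"
    by (rule norm_triangle_ineq)
  also have "\<dots> = s_coord z * norm (x - p) + r_coord z * norm (y - p)"
    using coords by simp
  also have "\<dots> \<le> (s_coord z + r_coord z) * M"
    using coords by (simp add: M_def distrib_right add_mono mult_left_mono)
  also have "\<dots> \<le> M"
    using coords by (intro mult_left_le_one_le) (auto simp: M_def le_max_iff_disj)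
  also have "\<dots> < d"
    using assms(2,3) by (simp add: M_def dist_norm norm_minus_commute)
  finally show ?thesis .
qed

lemma extreme_vertex_exists:
  assumes "finite W" "y \<in> W" "p \<notin> W"
  obtains v where "v \<in> W" "in_triangle v" "\<And>z. z \<in> W \<Longrightarrow> in_triangle z \<Longrightarrow> 0 \<le> side v z"
proof -
  define T where "T = {z \<in> W. in_triangle z}"
  define t where "t z = r_coord z / (s_coord z + r_coord z)" for z
  obtain v where v: "v \<in> T" "\<And>z. z \<in> T \<Longrightarrow> t v \<le> t z"
    using ex_min_if_finite[of "t ` T"] assms in_triangle_y
    by (force simp: T_def not_less)
  have "0 \<le> side v z" if "z \<in> T" for z
  proof -
    have pos: "0 < s_coord z + r_coord z" "0 < s_coord v + r_coord v"
      using that v(1) assms(3) coords_sum_pos by (auto simp: T_def)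
    have "r_coord v * (s_coord z + r_coord z) \<le> r_coord z * (s_coord v + r_coord v)"
      using v(2)[OF that] pos by (simp add: t_def divide_simps)
    then show ?thesis by (simp add: side_def algebra_simps)
  qed
  then show ?thesis using that v(1) by (auto simp: T_def)
qed

lemma seg_cross_side_neg:
  assumes "seg_cross p v a b"
  shows "side v a < 0 \<or> side v b < 0"
proof -
  obtain c where c_pv: "c \<in> open_segment p v" and c_ab: "c \<in> open_segment a b"
    using assms unfolding seg_cross_def by blast
  obtain \<tau> where c_\<tau>: "c = p + \<tau> *\<^sub>R (v - p)"
    using c_pv by (auto simp: in_open_segment_iff)
  obtain \<sigma> where c: "0 < \<sigma>" "\<sigma> < 1" "c = a + \<sigma> *\<^sub>R (b - a)"
    using c_ab by (auto simp: in_open_segment_iff)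
  have "side v c = 0"
    using c_\<tau> by (simp add: side_eq_cross2)
  then have sum0: "(1 - \<sigma>) * side v a + \<sigma> * side v b = 0"
    using c(3) side_segment[of v a \<sigma> b] by (simp add: algebra_simps)
  have "side v b - side v a \<noteq> 0"
    using seg_cross_not_parallel[OF assms] nondegenerate
    by (simp add: side_eq_cross2 diff_divide_distrib[symmetric] cross2_diff)
  moreover have "0 \<le> (1 - \<sigma>) * side v a" "0 \<le> \<sigma> * side v b"
    if "0 \<le> side v a" "0 \<le> side v b"
    using that c(1,2) by simp_all
  ultimately show ?thesis using sum0 c(1,2) by (smt (verit) mult_pos_pos)
qed

lemma coords_sum_diff:
  "(s_coord b + r_coord b) - (s_coord a + r_coord a) = - cross2 (y - x) (b - a) / cross2 (x - p) (y - p)"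
proof -
  have "(s_coord b + r_coord b) - (s_coord a + r_coord a) = (s_coord b - s_coord a) + (r_coord b - r_coord a)"
    by simp
  also have "\<dots> = (cross2 (b - a) (y - p) + cross2 (x - p) (b - a)) / cross2 (x - p) (y - p)"
    by (simp only: coords_diff add_divide_distrib)
  also have "cross2 (b - a) (y - p) + cross2 (x - p) (b - a) = - cross2 (y - x) (b - a)"
    by (simp add: cross2_def algebra_simps)
  finally show ?thesis by simp
qed

lemma in_closed_segment_px_if_coords:
  assumes "in_triangle v" "v \<noteq> p" "r_coord G = 0" "s_coord G + r_coord G \<le> 1"
    and "side v G < 0 \<or> (G = p + \<tau> *\<^sub>R (v - p) \<and> 0 < \<tau>)"
  shows "G \<in> closed_segment p x" "G \<noteq> p"
proof -
  have v: "0 \<le> s_coord v" "0 \<le> r_coord v" "0 < s_coord v + r_coord v"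
    using assms(1,2) coords_sum_pos by (auto simp: in_triangle_def)
  have "0 < s_coord G"
    using assms(5)
  proof
    assume "side v G < 0"
    then have "0 < s_coord G * r_coord v" using assms(3) by (simp add: side_def)
    then show ?thesis using v(2) by (simp add: zero_less_mult_iff)
  next
    assume G: "G = p + \<tau> *\<^sub>R (v - p) \<and> 0 < \<tau>"
    then have "\<tau> * r_coord v = 0" using assms(3) coords_segment(2)[of p \<tau> v] by simp
    then show ?thesis using G v coords_segment(1)[of p \<tau> v] by simp
  qed
  then show "G \<in> closed_segment p x" "G \<noteq> p"
    unfolding in_closed_segment_iff using assms(3,4) coords_decomp[of G]
    by (auto intro!: exI[of _ "s_coord G"])
qed

lemma in_open_segment_xy_if_coords:
  assumes "in_triangle v" "s_coord G + r_coord G = 1" "0 < r_coord G" "side v G < 0"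
  shows "G \<in> open_segment x y"
proof -
  have "0 \<le> r_coord G * s_coord v" using assms(1,3) by (simp add: in_triangle_def)
  then have "0 < s_coord G * r_coord v" using assms(4) by (simp add: side_def)
  then have "0 < s_coord G" using assms(1) by (simp add: in_triangle_def zero_less_mult_iff)
  moreover have "x \<noteq> y" using nondegenerate by auto
  moreover have "G = x + r_coord G *\<^sub>R (y - x)"
  proof -
    have "s_coord G = 1 - r_coord G" using assms(2) by simp
    then have "G = p + (1 - r_coord G) *\<^sub>R (x - p) + r_coord G *\<^sub>R (y - p)"
      using coords_decomp[of G] by simp
    also have "\<dots> = x + r_coord G *\<^sub>R (y - x)"
      by (simp add: algebra_simps)
    finally show ?thesis .
  qed
  ultimately show ?thesis using assms(2,3) unfolding in_open_segment_iff by auto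
qed

lemma open_segment_to_vertex_in_triangle:
  assumes "in_triangle v" "c = p + \<tau> *\<^sub>R (v - p)" "0 < \<tau>" "\<tau> < 1"
  shows "s_coord c = \<tau> * s_coord v" "r_coord c = \<tau> * r_coord v"
    "0 \<le> r_coord c" "s_coord c + r_coord c < 1"
proof -
  show c: "s_coord c = \<tau> * s_coord v" "r_coord c = \<tau> * r_coord v"
    using coords_segment[of p \<tau> v] assms(2) by simp_all
  have "\<tau> * (s_coord v + r_coord v) \<le> \<tau>"
    using assms(1,3) by (simp add: in_triangle_def mult_left_le)
  then show "0 \<le> r_coord c" "s_coord c + r_coord c < 1"
    unfolding c using assms(1,3,4) by (simp_all add: in_triangle_def algebra_simps)
qed

lemma outside_triangle_if_side_neg:
  assumes "in_triangle v" "side v a < 0" "\<not> in_triangle a"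
  shows "r_coord a < 0 \<or> 1 - s_coord a - r_coord a < 0"
proof (rule ccontr)
  assume inside: "\<not> ?thesis"
  then have "0 \<le> r_coord a * s_coord v" using assms(1) by (simp add: in_triangle_def)
  then have "0 < s_coord a * r_coord v" using assms(2) by (simp add: side_def)
  then have "0 < s_coord a" using assms(1) by (simp add: in_triangle_def zero_less_mult_iff)
  then show False using inside assms(3) by (auto simp: in_triangle_def)
qed

lemma triangle_exit_point:
  assumes "c = a + \<sigma> *\<^sub>R (b - a)" "0 < \<sigma>" "0 \<le> r_coord c" "s_coord c + r_coord c \<le> 1"
    and "r_coord a < 0 \<or> 1 - s_coord a - r_coord a < 0"
  obtains l where "0 < l" "l \<le> \<sigma>"
    "0 \<le> r_coord (a + l *\<^sub>R (b - a))" "s_coord (a + l *\<^sub>R (b - a)) + r_coord (a + l *\<^sub>R (b - a)) \<le> 1"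
    "r_coord (a + l *\<^sub>R (b - a)) = 0 \<or> s_coord (a + l *\<^sub>R (b - a)) + r_coord (a + l *\<^sub>R (b - a)) = 1"
proof -
  have "s_coord c = s_coord a + \<sigma> * (s_coord b - s_coord a)"
    "r_coord c = r_coord a + \<sigma> * (r_coord b - r_coord a)"
    using coords_segment assms(1) by simp_all
  then have "0 \<le> r_coord a + \<sigma> * (r_coord b - r_coord a)"
    "0 \<le> (1 - s_coord a - r_coord a) + \<sigma> * (- (s_coord b - s_coord a) - (r_coord b - r_coord a))"
    using assms(3,4) by (simp_all add: algebra_simps)
  then obtain l where "0 < l" "l \<le> \<sigma>" "0 \<le> r_coord a + l * (r_coord b - r_coord a)"
    "0 \<le> (1 - s_coord a - r_coord a) + l * (- (s_coord b - s_coord a) - (r_coord b - r_coord a))"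
    "r_coord a + l * (r_coord b - r_coord a) = 0 \<or>
     (1 - s_coord a - r_coord a) + l * (- (s_coord b - s_coord a) - (r_coord b - r_coord a)) = 0"
    using linear_exit_point[OF assms(2)] assms(5) by blast
  then show ?thesis
    using that[of l] unfolding coords_segment by (auto simp: algebra_simps)
qed

lemma crossing_edge_leaves_triangle:
  assumes v: "in_triangle v" "v \<noteq> p" and cross: "seg_cross p v a b"
    and a: "side v a < 0" "\<not> in_triangle a"
  shows "(\<exists>G\<in>open_segment a b. G \<in> closed_segment p x \<and> G \<noteq> p \<and> cross2 (x - p) (b - a) \<noteq> 0)
    \<or> seg_cross x y a b"
proof -
  obtain c where c_pv: "c \<in> open_segment p v" and c_ab: "c \<in> open_segment a b"
    using cross unfolding seg_cross_def by blast
  obtain \<tau> where \<tau>: "0 < \<tau>" "\<tau> < 1" "c = p + \<tau> *\<^sub>R (v - p)"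
    using c_pv by (auto simp: in_open_segment_iff)
  obtain \<sigma> where \<sigma>: "a \<noteq> b" "0 < \<sigma>" "\<sigma> < 1" "c = a + \<sigma> *\<^sub>R (b - a)"
    using c_ab by (auto simp: in_open_segment_iff)
  have c_coords: "s_coord c = \<tau> * s_coord v" "r_coord c = \<tau> * r_coord v"
    and c_inside: "0 \<le> r_coord c" "s_coord c + r_coord c < 1"
    using open_segment_to_vertex_in_triangle[OF v(1) \<tau>(3,1,2)] by simp_all
  have c_seg: "s_coord c = s_coord a + \<sigma> * (s_coord b - s_coord a)"
    "r_coord c = r_coord a + \<sigma> * (r_coord b - r_coord a)"
    using coords_segment \<sigma>(4) by simp_all
  \<comment> \<open>G is where the edge, walked from a towards c, enters the triangle.\<close>
  obtain l where l: "0 < l" "l \<le> \<sigma>" and G_coords: "0 \<le> r_coord (a + l *\<^sub>R (b - a))"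
      "s_coord (a + l *\<^sub>R (b - a)) + r_coord (a + l *\<^sub>R (b - a)) \<le> 1"
      "r_coord (a + l *\<^sub>R (b - a)) = 0 \<or> s_coord (a + l *\<^sub>R (b - a)) + r_coord (a + l *\<^sub>R (b - a)) = 1"
    by (rule triangle_exit_point[OF \<sigma>(4,2) c_inside(1) less_imp_le[OF c_inside(2)]
          outside_triangle_if_side_neg[OF v(1) a]])
  define G where "G = a + l *\<^sub>R (b - a)"
  note G_coords = G_coords[folded G_def]
  have G_ab: "G \<in> open_segment a b"
    unfolding in_open_segment_iff G_def using \<sigma> l by auto
  have G_side: "side v G < 0" if "l < \<sigma>"
  proof -
    have "side v c = 0" using c_coords by (simp add: side_def)
    then have "0 < \<sigma> * (side v b - side v a)" using side_segment[of v a \<sigma> b] \<sigma>(4) a(1) by simp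
    then have "l * (side v b - side v a) < \<sigma> * (side v b - side v a)"
      using that \<sigma>(2) by (simp add: zero_less_mult_iff)
    then show ?thesis
      using side_segment[of v a \<sigma> b] side_segment[of v a l b] \<open>side v c = 0\<close>
      unfolding G_def \<sigma>(4) by linarith
  qed
  have G_c: "G = c" if "\<not> l < \<sigma>" using that l(2) \<sigma>(4) G_def by simp
  show ?thesis
  proof (cases "r_coord G = 0")
    case True
    then have "G \<in> closed_segment p x" "G \<noteq> p"
      using in_closed_segment_px_if_coords[OF v True G_coords(2), of \<tau>] G_side G_c \<tau> by blast+
    moreover have "cross2 (x - p) (b - a) \<noteq> 0"
    proof
      assume "cross2 (x - p) (b - a) = 0"
      then have "r_coord b = r_coord a" using coords_diff(2)[of b a] by simp
      then have "r_coord a = 0" "r_coord v = 0"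
        using True c_seg c_coords \<tau>(1) coords_segment(2)[of a l b] unfolding G_def by auto
      then show False using a(1) by (simp add: side_def)
    qed
    ultimately show ?thesis using G_ab by blast
  next
    case False
    then have on_xy: "s_coord G + r_coord G = 1" "0 < r_coord G" using G_coords by auto
    then have "l < \<sigma>" using G_c c_inside by force
    then have "G \<in> open_segment x y" using in_open_segment_xy_if_coords[OF v(1) on_xy] G_side by blast
    moreover have "cross2 (y - x) (b - a) \<noteq> 0"
    proof
      assume "cross2 (y - x) (b - a) = 0"
      then have sum_const: "(s_coord b - s_coord a) + (r_coord b - r_coord a) = 0"
        using coords_sum_diff[of b a] by simp
      have "s_coord c + r_coord c = s_coord a + r_coord a + \<sigma> * ((s_coord b - s_coord a) + (r_coord b - r_coord a))"
        "s_coord G + r_coord G = s_coord a + r_coord a + l * ((s_coord b - s_coord a) + (r_coord b - r_coord a))"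
        using c_seg unfolding G_def coords_segment by (simp_all add: algebra_simps)
      then have "s_coord c + r_coord c = s_coord G + r_coord G"
        unfolding sum_const by simp
      then show False using on_xy(1) c_inside by simp
    qed
    ultimately show ?thesis using G_ab seg_cross_if_common_point by blast
  qed
qed

end

lemma seg_cross_through_initial_part:
  assumes "x \<in> open_segment p q" "G \<in> closed_segment p x" "G \<noteq> p" "G \<in> open_segment a b"
    and "cross2 (x - p) (b - a) \<noteq> 0"
  shows "seg_cross p q a b"
proof -
  have "open_segment p x \<subseteq> open_segment p q"
    using assms(1) open_closed_segment subset_open_segment by blast
  moreover have "G \<in> open_segment p x \<or> G = x"
    using assms(2,3) closed_segment_eq_open[of p x] by blast
  ultimately have "G \<in> open_segment p q"
    using assms(1) by blast
  moreover obtain \<mu> where "x - p = \<mu> *\<^sub>R (q - p)"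
    using assms(1) by (auto simp: in_open_segment_iff)
  then have "cross2 (q - p) (b - a) \<noteq> 0" using assms(5) by auto
  ultimately show ?thesis using assms(4) seg_cross_if_common_point by blast
qed

lemma edges_cross_commute: "edges_cross e f \<longleftrightarrow> edges_cross f e"
  unfolding edges_cross_def using seg_cross_commute by blast

lemma geometric_graph_edge_endpoints:
  assumes "geometric_graph V E" "{a, b} \<in> E"
  shows "a \<in> V" "b \<in> V"
  using assms unfolding geometric_graph_def by (auto simp: doubleton_eq_iff)

lemma plane_graph_Un:
  assumes "plane_graph V E" "V \<subseteq> W" "geometric_graph W F"
    and "\<And>e f. e \<in> E \<Longrightarrow> f \<in> F \<Longrightarrow> \<not> edges_cross e f"
    and "\<And>e f. e \<in> F \<Longrightarrow> f \<in> F \<Longrightarrow> \<not> edges_cross e f"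
  shows "plane_graph W (E \<union> F)"
proof -
  have "geometric_graph V E" "\<And>e f. e \<in> E \<Longrightarrow> f \<in> E \<Longrightarrow> \<not> edges_cross e f"
    using assms(1) by (simp_all add: plane_graph_def)
  then have "geometric_graph W (E \<union> F)"
    using assms(2,3) unfolding geometric_graph_def by (metis Un_iff subsetD)
  moreover have "\<not> edges_cross e f" if "e \<in> E \<union> F" "f \<in> E \<union> F" for e f
    using that assms(4,5) \<open>\<And>e f. e \<in> E \<Longrightarrow> f \<in> E \<Longrightarrow> \<not> edges_cross e f\<close>
      edges_cross_commute[of e f] by blast
  ultimately show ?thesis by (simp add: plane_graph_def)
qed

lemma closest_visible_dist_le_if_seg_cross:
  assumes graph: "geometric_graph V E" and "p \<notin> V"
    and "closest_visible V E p q" "visible V E p' q'" "seg_cross p q p' q'"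
  shows "dist p q \<le> dist p q'"
proof (rule ccontr)
  assume "\<not> ?thesis"
  then have closer: "dist p q' < dist p q" by simp
  obtain x where x: "x \<in> open_segment p q" "x \<in> open_segment p' q'"
    using assms(5) unfolding seg_cross_def by blast
  interpret triangle_frame p x q'
    using seg_cross_point_off_line[OF assms(5) x] by unfold_locales
  have q': "q' \<in> V" "\<And>a b. {a, b} \<in> E \<Longrightarrow> \<not> seg_cross p' q' a b"
    using assms(4) by (simp_all add: visible_def)
  have q: "\<And>a b. {a, b} \<in> E \<Longrightarrow> \<not> seg_cross p q a b" "\<And>z. visible V E p z \<Longrightarrow> dist p q \<le> dist p z"
    using assms(3) by (auto simp: closest_visible_def visible_def)
  have "finite V" using graph by (simp add: geometric_graph_def)
  then obtain v where v: "v \<in> V" "in_triangle v" "\<And>z. z \<in> V \<Longrightarrow> in_triangle z \<Longrightarrow> 0 \<le> side v z"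
    using extreme_vertex_exists q'(1) assms(2) by blast
  have "dist p v < dist p q"
    using dist_lt_if_in_triangle[OF v(2)] dist_in_open_segment[OF x(1)] closer
    by (simp add: dist_commute)
  then have "\<not> visible V E p v" using q(2) by (meson not_le)
  then obtain a b where ab: "{a, b} \<in> E" "seg_cross p v a b"
    using v(1) unfolding visible_def by blast
  have False if edge: "{a, b} \<in> E" "seg_cross p v a b" and "side v a < 0" for a b
  proof -
    have "\<not> in_triangle a"
      using v(3) geometric_graph_edge_endpoints[OF graph edge(1)] \<open>side v a < 0\<close> by (meson not_le)
    moreover have "v \<noteq> p" using v(1) assms(2) by auto
    ultimately consider G where "G \<in> open_segment a b" "G \<in> closed_segment p x" "G \<noteq> p"
        "cross2 (x - p) (b - a) \<noteq> 0"
      | "seg_cross x q' a b"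
      using crossing_edge_leaves_triangle[OF v(2) _ edge(2) \<open>side v a < 0\<close>] by blast
    then show False
    proof cases
      case 1
      then show ?thesis using seg_cross_through_initial_part[OF x(1)] q(1) edge(1) by blast
    next
      case 2
      then have "seg_cross p' q' a b"
        using seg_cross_subsegment x(2) open_closed_segment ends_in_segment by blast
      then show ?thesis using q'(2) edge(1) by blast
    qed
  qed
  moreover have "{b, a} \<in> E" "seg_cross p v b a"
    using ab seg_cross_swap_right by (auto simp: insert_commute)
  ultimately show False
    using seg_cross_side_neg[OF ab(2)] ab by blast
qed

lemma closest_visible_segments_not_cross:
  assumes "geometric_graph V E" "p \<notin> V" "p' \<notin> V"
    and "closest_visible V E p q" "closest_visible V E p' q'"
  shows "\<not> seg_cross p q p' q'"
proof
  assume cross: "seg_cross p q p' q'"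
  have "dist p q \<le> dist p q'"
    using closest_visible_dist_le_if_seg_cross[OF assms(1,2,4) _ cross] assms(5)
    by (simp add: closest_visible_def)
  moreover have "dist p' q' \<le> dist p' q"
    using closest_visible_dist_le_if_seg_cross[OF assms(1,3,5) _ seg_cross_commute[THEN iffD1, OF cross]]
      assms(4) by (simp add: closest_visible_def)
  ultimately show False using seg_cross_shorter_side[OF cross] by linarith
qed

lemma geometric_graph_add_pendant_edges:
  assumes "geometric_graph V E" "finite Q" "\<And>p. p \<in> Q \<Longrightarrow> p \<notin> V \<and> f p \<in> V"
  shows "geometric_graph (V \<union> Q) ((\<lambda>p. {p, f p}) ` Q)"
  unfolding geometric_graph_def
proof (intro conjI ballI)
  show "finite (V \<union> Q)" using assms(1,2) by (simp add: geometric_graph_def)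
  fix e assume "e \<in> (\<lambda>p. {p, f p}) ` Q"
  then obtain p where "p \<in> Q" "e = {p, f p}" by blast
  moreover have "p \<noteq> f p" using assms(3)[OF \<open>p \<in> Q\<close>] by auto
  ultimately show "\<exists>a b. e = {a, b} \<and> a \<in> V \<union> Q \<and> b \<in> V \<union> Q \<and> a \<noteq> b"
    using assms(3) by blast
qed

lemma visible_not_edges_cross:
  assumes "geometric_graph V E" "e \<in> E" "visible V E p q"
  shows "\<not> edges_cross e {p, q}"
proof -
  obtain a b where "e = {a, b}" using assms(1,2) by (auto simp: geometric_graph_def)
  moreover have "\<not> seg_cross p q a b" using assms(2,3) calculation by (simp add: visible_def)
  then have "\<not> seg_cross a b p q" using seg_cross_commute by blast
  ultimately show ?thesis by (simp add: edges_cross_doubleton_iff)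
qed

theorem theorem2:
  fixes V :: "pt set" and E :: "pt set set" and Q :: "pt set" and f :: "pt \<Rightarrow> pt"
  assumes "plane_graph V E"
    and "finite Q"
    and "Q \<inter> graph_points V E = {}"
    and "\<forall>p\<in>Q. closest_visible V E p (f p)"
  shows "plane_graph (V \<union> Q) (E \<union> (\<lambda>p. {p, f p}) ` Q)"
proof (rule plane_graph_Un[OF assms(1)])
  have graph: "geometric_graph V E" using assms(1) by (simp add: plane_graph_def)
  have "V \<subseteq> graph_points V E" unfolding graph_points_def by (rule Un_upper1)
  then have p_notin: "p \<notin> V" if "p \<in> Q" for p
    using assms(3) that by blast
  have f_visible: "visible V E p (f p)" if "p \<in> Q" for p
    using assms(4) that by (simp add: closest_visible_def)
  show "geometric_graph (V \<union> Q) ((\<lambda>p. {p, f p}) ` Q)"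
    using geometric_graph_add_pendant_edges[OF graph assms(2)] p_notin f_visible
    by (simp add: visible_def)
  show "\<not> edges_cross e e'" if "e \<in> E" "e' \<in> (\<lambda>p. {p, f p}) ` Q" for e e'
    using that visible_not_edges_cross[OF graph] f_visible by blast
  show "\<not> edges_cross e e'" if "e \<in> (\<lambda>p. {p, f p}) ` Q" "e' \<in> (\<lambda>p. {p, f p}) ` Q" for e e'
    using that closest_visible_segments_not_cross[OF graph] p_notin assms(4)
    by (auto simp: edges_cross_doubleton_iff)
qed simp

end
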